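(* Let $0<q<1$. For $n\in\mathbb{N}$ put $x_n=\dfrac{q^n-q^{-n}}{q-q^{-1}}$, $x_0!=1$ and $x_n!=x_1x_2\cdots x_n$ for $n\geq 1$. Define the entire function $$\mathfrak{E}_q(t)=\sum_{n=0}^{\infty} q^{\frac{n(n+1)}{2}}\frac{t^n}{x_n!},$$ and for $t>0$ define $$g_q(t)=\frac{1}{\sqrt{2\pi\,|\ln q|}}\exp\!\left[-\frac{\left(\ln\frac{t}{\sqrt q}\right)^2}{2|\ln q|}\right].$$ Let $$w_q(t)=(q^{-1}-q)\sum_{j=0}^{\infty} g_q\!\left(t\,\frac{q^{-1}-q}{q^{2j}}\right)\mathfrak{E}_q\!\left(-\frac{q^{2j}}{q^{-1}-q}\right),\qquad t>0.$$ Then $w_q$ is a positive density on $(0,\infty)$ and for every $n\in\mathbb{N}$, $$x_n!=\int_0^{\infty} t^n\, w_q(t)\,dt .$$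
   Context: The numbers $x_n$ are the symmetric $q$-deformations of the nonnegative integers, and $x_n!$ their $q$-factorials. The claim is that $w_q(t)\,dt$ solves the Stieltjes moment problem for the sequence $(x_n!)_{n\in\mathbb{N}}$ with a positive (in particular probability, since $x_0!=1$) measure. *)

theory Defs
  imports "HOL-Analysis.Analysis"
begin

definition qnum :: "real \<Rightarrow> nat \<Rightarrow> real" where
  "qnum q n = (q ^ n - inverse q ^ n) / (q - inverse q)"

definition qfact :: "real \<Rightarrow> nat \<Rightarrow> real" where
  "qfact q n = (\<Prod>k\<in>{1..n}. qnum q k)"

definition qE :: "real \<Rightarrow> real \<Rightarrow> real" where
  "qE q t = (\<Sum>n. q ^ (n * (n + 1) div 2) * t ^ n / qfact q n)"

definition qg :: "real \<Rightarrow> real \<Rightarrow> real" where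
  "qg q t = 1 / sqrt (2 * pi * \<bar>ln q\<bar>) *
            exp (- ((ln (t / sqrt q))\<^sup>2) / (2 * \<bar>ln q\<bar>))"

definition qw_term :: "real \<Rightarrow> real \<Rightarrow> nat \<Rightarrow> real" where
  "qw_term q t j = qg q (t * (inverse q - q) / q ^ (2 * j)) *
                   qE q (- (q ^ (2 * j)) / (inverse q - q))"

definition qw :: "real \<Rightarrow> real \<Rightarrow> real" where
  "qw q t = (inverse q - q) * (\<Sum>j. qw_term q t j)"

end

theory Submission
  imports Defs "HOL-Probability.Distributions"
begin

text \<open>
  Put \<open>c = q\<inverse> - q\<close> and \<open>b = q\<^sup>2\<close>. Then \<open>x\<^sub>n! = q\<^bsup>-n(n+1)/2\<^esup> (b;b)\<^sub>n / c\<^sup>n\<close>, and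
  \<open>\<E>\<^sub>q(-q\<^bsup>2j\<^esup>/c) = E(b\<^bsup>j+1\<^esup>)\<close> for Euler's series
  \<open>E(z) = \<Sum>\<^sub>k (-1)\<^sup>k b\<^bsup>k(k-1)/2\<^esup> z\<^sup>k / (b;b)\<^sub>k\<close>, which satisfies \<open>E(z) = (1 - z) E(bz)\<close> and
  \<open>E(0) = 1\<close>; hence \<open>E(b\<^sup>m)\<close> increases to \<open>1\<close> and lies in \<open>(0,1]\<close> for \<open>m \<ge> 1\<close>. Together
  with \<open>t g\<^sub>q(t) \<le> (2\<pi>|ln q|)\<^bsup>-1/2\<^esup>\<close> this gives positivity and convergence of \<open>w\<^sub>q\<close>.
  Under \<open>t = e\<^sup>u\<close> the function \<open>g\<^sub>q\<close> becomes a normal density, so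
  \<open>\<integral> t\<^sup>n g\<^sub>q(at) dt = q\<^bsup>-n(n+1)/2\<^esup> a\<^bsup>-n-1\<^esup>\<close>. Integrating termwise (monotone
  convergence), the moment identity reduces to \<open>T(b\<^bsup>n+1\<^esup>) = (b;b)\<^sub>n\<close> for
  \<open>T(s) = \<Sum>\<^sub>j s\<^sup>j E(b\<^bsup>j+1\<^esup>)\<close>; the functional equation of \<open>E\<close> yields
  \<open>T(bs) = (1 - s) T(s)\<close>, and \<open>T(b) = 1\<close> by telescoping.
\<close>

definition qpochhammer :: "real \<Rightarrow> nat \<Rightarrow> real" where
  "qpochhammer b k = (\<Prod>i\<in>{1..k}. 1 - b ^ i)"

definition euler_coeff :: "real \<Rightarrow> nat \<Rightarrow> real" where
  "euler_coeff b k = (-1) ^ k * b ^ (k * (k - 1) div 2) / qpochhammer b k"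

text \<open>Euler's expansion of the infinite product \<open>\<Prod>i. 1 - z * b ^ i\<close>.\<close>
definition euler_series :: "real \<Rightarrow> real \<Rightarrow> real" where
  "euler_series b z = (\<Sum>k. euler_coeff b k * z ^ k)"

lemma qpochhammer_0 [simp]: "qpochhammer b 0 = 1"
  by (simp add: qpochhammer_def)

lemma qpochhammer_Suc: "qpochhammer b (Suc k) = qpochhammer b k * (1 - b ^ Suc k)"
  by (simp add: qpochhammer_def prod.nat_ivl_Suc')

lemma triangular_eq: "k * (k + 1) div 2 = k * (k - 1) div 2 + (k::nat)"
  by (cases k) (simp_all add: algebra_simps)

lemma euler_coeff_Suc:
  "euler_coeff b (Suc k) = - euler_coeff b k * b ^ k / (1 - b ^ Suc k)"
proof -
  have "b ^ (Suc k * (Suc k - 1) div 2) = b ^ (k * (k - 1) div 2) * b ^ k"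
    using triangular_eq[of k] by (simp add: power_add mult.commute)
  then show ?thesis by (simp add: euler_coeff_def qpochhammer_Suc)
qed

lemma euler_series_0 [simp]: "euler_series b 0 = 1"
  unfolding euler_series_def powser_zero by (simp add: euler_coeff_def)

context
  fixes b :: real
  assumes b: "0 < b" "b < 1"
begin

lemma qpochhammer_pos: "0 < qpochhammer b k"
  unfolding qpochhammer_def
proof (rule prod_pos)
  fix i :: nat assume "i \<in> {1..k}"
  then have "b ^ i < 1" using b by (simp add: power_less_one_iff)
  then show "0 < 1 - b ^ i" by simp
qed

lemma summable_euler_series_abs: "summable (\<lambda>k. \<bar>euler_coeff b k * z ^ k\<bar>)"
proof -
  have "(\<lambda>n. b ^ n * \<bar>z\<bar>) \<longlonglongrightarrow> 0 * \<bar>z\<bar>"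
    using b by (intro tendsto_mult_right LIMSEQ_power_zero) auto
  then have "eventually (\<lambda>n. b ^ n * \<bar>z\<bar> < (1 - b) / 2) sequentially"
    using b by (intro order_tendstoD(2)) auto
  then obtain N where N: "\<And>n. n \<ge> N \<Longrightarrow> b ^ n * \<bar>z\<bar> < (1 - b) / 2"
    unfolding eventually_sequentially by blast
  show ?thesis
  proof (rule summable_ratio_test[where c = "1/2" and N = N])
    fix n assume "n \<ge> N"
    have "b ^ Suc n \<le> b"
      using b by (simp add: mult_left_le power_le_one)
    then have ratio: "b ^ n * \<bar>z\<bar> / (1 - b ^ Suc n) \<le> 1/2"
      using N[OF \<open>n \<ge> N\<close>] power_Suc_less_one[OF b, of n]
      by (subst pos_divide_le_eq) (auto simp: field_simps)
    have "\<bar>euler_coeff b (Suc n) * z ^ Suc n\<bar>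
        = \<bar>euler_coeff b n * z ^ n\<bar> * (b ^ n * \<bar>z\<bar> / (1 - b ^ Suc n))"
      using b power_Suc_less_one[OF b, of n]
      by (simp add: euler_coeff_Suc abs_mult power_abs)
    also have "\<dots> \<le> \<bar>euler_coeff b n * z ^ n\<bar> * (1/2)"
      by (intro mult_left_mono ratio) simp
    finally show "norm \<bar>euler_coeff b (Suc n) * z ^ Suc n\<bar> \<le> 1/2 * norm \<bar>euler_coeff b n * z ^ n\<bar>"
      by simp
  qed simp
qed

lemma summable_euler_series: "summable (\<lambda>k. euler_coeff b k * z ^ k)"
  using summable_euler_series_abs by (rule summable_rabs_cancel)

lemma euler_series_functional_eq: "euler_series b z = (1 - z) * euler_series b (b * z)"
proof -
  define d where "d k = euler_coeff b k * z ^ k - euler_coeff b k * (b * z) ^ k" for k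
  have "d sums (euler_series b z - euler_series b (b * z))"
    unfolding d_def euler_series_def by (intro sums_diff summable_sums summable_euler_series)
  then have "(\<lambda>k. d (Suc k)) sums (euler_series b z - euler_series b (b * z))"
    by (subst sums_Suc_iff) (simp add: d_def)
  moreover have "d (Suc k) = - z * (euler_coeff b k * (b * z) ^ k)" for k
  proof -
    have "d (Suc k) = euler_coeff b (Suc k) * (1 - b ^ Suc k) * z ^ Suc k"
      unfolding d_def power_mult_distrib by (simp only: algebra_simps)
    also have "euler_coeff b (Suc k) * (1 - b ^ Suc k) = - euler_coeff b k * b ^ k"
      using power_Suc_less_one[OF b, of k] by (simp only: euler_coeff_Suc) simp
    finally show ?thesis by (simp add: power_mult_distrib algebra_simps)
  qed
  moreover have "(\<lambda>k. - z * (euler_coeff b k * (b * z) ^ k)) sums (- z * euler_series b (b * z))"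
    unfolding euler_series_def by (intro sums_mult summable_sums summable_euler_series)
  ultimately have "euler_series b z - euler_series b (b * z) = - z * euler_series b (b * z)"
    using sums_unique2 by force
  then show ?thesis by (simp add: algebra_simps)
qed

lemma euler_series_1 [simp]: "euler_series b 1 = 0"
  using euler_series_functional_eq[of 1] by simp

lemma euler_series_power_Suc:
  "euler_series b (b ^ m) = (1 - b ^ m) * euler_series b (b ^ Suc m)"
  using euler_series_functional_eq[of "b ^ m"] by simp

lemma isCont_euler_series: "isCont (euler_series b) z"
  unfolding euler_series_def[abs_def]
  by (rule isCont_powser_converges_everywhere) (rule summable_euler_series)

lemma euler_series_power_tendsto: "(\<lambda>m. euler_series b (b ^ m)) \<longlonglongrightarrow> 1"
proof -
  have "(\<lambda>m. b ^ m) \<longlonglongrightarrow> 0"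
    using b by (intro LIMSEQ_power_zero) auto
  then have "(\<lambda>m. euler_series b (b ^ m)) \<longlonglongrightarrow> euler_series b 0"
    by (rule isCont_tendsto_compose[OF isCont_euler_series])
  then show ?thesis by simp
qed

lemma euler_series_power_pos:
  assumes "0 < m"
  shows "0 < euler_series b (b ^ m)"
proof -
  obtain N where N: "\<And>n. n \<ge> N \<Longrightarrow> 0 < euler_series b (b ^ n)"
    using order_tendstoD(1)[OF euler_series_power_tendsto, of 0]
    unfolding eventually_sequentially by auto
  have "m \<le> max m N" by simp
  then show ?thesis
  proof (induction m rule: inc_induct)
    case base
    show ?case by (rule N) simp
  next
    case (step n)
    have "b ^ n < 1"
      using assms step.hyps(1) b by (simp add: power_less_one_iff)
    then show ?case
      using step.IH by (simp add: euler_series_power_Suc[of n])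
  qed
qed

lemma euler_series_power_nonneg: "0 \<le> euler_series b (b ^ m)"
  using euler_series_power_pos[of m] by (cases m) auto

lemma euler_series_power_le_1: "euler_series b (b ^ m) \<le> 1"
proof (rule incseq_le[OF _ euler_series_power_tendsto])
  show "incseq (\<lambda>m. euler_series b (b ^ m))"
  proof (rule incseq_SucI)
    fix n
    have "b ^ n * euler_series b (b ^ Suc n) \<ge> 0"
      using b euler_series_power_nonneg[of "Suc n"] by simp
    then show "euler_series b (b ^ n) \<le> euler_series b (b ^ Suc n)"
      by (simp add: euler_series_power_Suc[of n] algebra_simps)
  qed
qed

lemma summable_geometric_euler_series:
  assumes "0 \<le> s" "s < 1"
  shows "summable (\<lambda>j. s ^ j * euler_series b (b ^ f j))"
proof (rule summable_comparison_test'[where N = 0])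
  show "summable (\<lambda>j. s ^ j)"
    using assms by (intro summable_geometric) simp
  show "norm (s ^ j * euler_series b (b ^ f j)) \<le> s ^ j" for j
    using assms euler_series_power_nonneg[of "f j"] euler_series_power_le_1[of "f j"]
    by (simp add: abs_mult mult_left_le)
qed

lemma euler_series_weighted_sum_dilation:
  assumes "0 \<le> s" "s < 1"
  defines "T \<equiv> \<lambda>s. \<Sum>j. s ^ j * euler_series b (b ^ Suc j)"
  shows "T (s * b) = (1 - s) * T s"
proof -
  have sb: "0 \<le> s * b" "s * b < 1"
    using assms b mult_left_le[of b s] by auto
  define U where "U s = (\<Sum>j. s ^ j * euler_series b (b ^ Suc (Suc j)))" for s
  have sU: "summable (\<lambda>j. s ^ j * euler_series b (b ^ Suc (Suc j)))" if "0 \<le> s" "s < 1" for s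
    using summable_geometric_euler_series[OF that, of "\<lambda>j. Suc (Suc j)"] .
  have T_U: "T s = euler_series b b + s * U s" if "0 \<le> s" "s < 1" for s
  proof -
    have "T s = euler_series b b + (\<Sum>j. s ^ Suc j * euler_series b (b ^ Suc (Suc j)))"
      unfolding T_def using suminf_split_head[OF summable_geometric_euler_series[OF that, of Suc]]
      by simp
    also have "(\<Sum>j. s ^ Suc j * euler_series b (b ^ Suc (Suc j))) = s * U s"
      unfolding U_def using suminf_mult[OF sU[OF that]] by (simp add: algebra_simps)
    finally show ?thesis .
  qed
  have "(\<lambda>j. s ^ j * euler_series b (b ^ Suc j))
        = (\<lambda>j. s ^ j * euler_series b (b ^ Suc (Suc j))
               - b * ((s * b) ^ j * euler_series b (b ^ Suc (Suc j))))"
    by (rule ext, subst euler_series_power_Suc) (simp add: power_mult_distrib algebra_simps)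
  then have T_eq: "T s = U s - b * U (s * b)"
    unfolding T_def U_def
    using suminf_diff[OF sU[OF assms(1,2)] summable_mult[OF sU[OF sb], of b]]
      suminf_mult[OF sU[OF sb], of b]
    by simp
  have "T (s * b) = euler_series b b + s * U s - s * (U s - b * U (s * b))"
    using T_U[OF sb] by (simp add: algebra_simps)
  also have "\<dots> = T s - s * T s"
    using T_U[OF assms(1,2)] T_eq by simp
  finally show ?thesis by (simp add: algebra_simps)
qed

lemma euler_series_weighted_sum_base: "(\<lambda>j. b ^ j * euler_series b (b ^ Suc j)) sums 1"
proof -
  have "(\<lambda>j. euler_series b (b ^ Suc j) - euler_series b (b ^ j)) sums (1 - euler_series b (b ^ 0))"
    by (rule telescope_sums[OF euler_series_power_tendsto])
  moreover have "euler_series b (b ^ Suc j) - euler_series b (b ^ j) = b ^ j * euler_series b (b ^ Suc j)" for j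
    by (subst (2) euler_series_power_Suc) (simp add: algebra_simps)
  ultimately show ?thesis by simp
qed

lemma euler_series_weighted_sum:
  "(\<lambda>j. (b ^ Suc n) ^ j * euler_series b (b ^ Suc j)) sums qpochhammer b n"
proof (induction n)
  case 0
  then show ?case using euler_series_weighted_sum_base by simp
next
  case (Suc n)
  have "0 \<le> b ^ Suc n" "b ^ Suc n < 1" using b power_Suc_less_one[OF b, of n] by auto
  from euler_series_weighted_sum_dilation[OF this]
  have "(\<Sum>j. (b ^ Suc (Suc n)) ^ j * euler_series b (b ^ Suc j)) = qpochhammer b (Suc n)"
    using sums_unique[OF Suc.IH] by (simp add: qpochhammer_Suc mult.commute)
  moreover have "summable (\<lambda>j. (b ^ Suc (Suc n)) ^ j * euler_series b (b ^ Suc j))"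
    using b power_Suc_less_one[OF b, of "Suc n"] by (intro summable_geometric_euler_series) auto
  ultimately show ?case by (metis summable_sums)
qed

end

lemma normal_density_exp_moment:
  assumes "0 < \<sigma>"
  shows "((\<lambda>u. exp (k * u) * normal_density \<mu> \<sigma> u) has_integral exp (k * \<mu> + k\<^sup>2 * \<sigma>\<^sup>2 / 2)) UNIV"
proof -
  have shift: "exp (k * u) * normal_density \<mu> \<sigma> u
      = exp (k * \<mu> + k\<^sup>2 * \<sigma>\<^sup>2 / 2) * normal_density (\<mu> + k * \<sigma>\<^sup>2) \<sigma> u" for u
  proof -
    have "k * u + - (u - \<mu>)\<^sup>2 / (2 * \<sigma>\<^sup>2)
        = (k * \<mu> + k\<^sup>2 * \<sigma>\<^sup>2 / 2) + - (u - (\<mu> + k * \<sigma>\<^sup>2))\<^sup>2 / (2 * \<sigma>\<^sup>2)"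
      using assms by (simp add: field_simps power2_eq_square)
    then have "exp (k * u) * exp (- (u - \<mu>)\<^sup>2 / (2 * \<sigma>\<^sup>2))
        = exp (k * \<mu> + k\<^sup>2 * \<sigma>\<^sup>2 / 2) * exp (- (u - (\<mu> + k * \<sigma>\<^sup>2))\<^sup>2 / (2 * \<sigma>\<^sup>2))"
      by (simp only: mult_exp_exp)
    then show ?thesis
      unfolding normal_density_def by (metis mult.left_commute)
  qed
  have "((\<lambda>u. exp (k * \<mu> + k\<^sup>2 * \<sigma>\<^sup>2 / 2) * normal_density (\<mu> + k * \<sigma>\<^sup>2) \<sigma> u)
          has_integral exp (k * \<mu> + k\<^sup>2 * \<sigma>\<^sup>2 / 2) * 1) UNIV"
    using has_integral_integral_lborel[OF integrable_normal_density] assms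
    by (intro has_integral_mult_right) simp
  then show ?thesis unfolding shift by simp
qed

lemma has_integral_exp_substitution:
  fixes f :: "real \<Rightarrow> real"
  assumes nonneg: "\<And>x. 0 < x \<Longrightarrow> 0 \<le> f x"
    and int: "((\<lambda>u. exp u * f (exp u)) has_integral I) UNIV"
  shows "(f has_integral I) {0<..}"
proof -
  have "(\<lambda>u. \<bar>exp u\<bar> * f (exp u)) absolutely_integrable_on UNIV \<and>
        integral UNIV (\<lambda>u. \<bar>exp u\<bar> * f (exp u)) = I"
    using int nonneg by (auto intro!: nonnegative_absolutely_integrable_1 simp: integral_unique)
  then have "f absolutely_integrable_on exp ` UNIV \<and> integral (exp ` UNIV) f = I"
    by (subst (asm) has_absolute_integral_change_of_variables_1'[where g' = exp])
       (auto intro!: derivative_eq_intros simp: inj_on_def)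
  moreover have "exp ` UNIV = {0::real<..}"
  proof (intro equalityI subsetI)
    fix x :: real
    assume "x \<in> {0<..}"
    then show "x \<in> exp ` UNIV"
      by (intro image_eqI[of x exp "ln x"]) auto
  qed auto
  ultimately show ?thesis
    using set_lebesgue_integral_eq_integral(1) by (metis has_integral_integral)
qed

lemma has_integral_suminf_nonneg:
  fixes f :: "nat \<Rightarrow> 'a::euclidean_space \<Rightarrow> real"
  assumes int: "\<And>j. (f j has_integral I j) S"
    and nonneg: "\<And>j x. x \<in> S \<Longrightarrow> 0 \<le> f j x"
    and summable: "\<And>x. x \<in> S \<Longrightarrow> summable (\<lambda>j. f j x)"
    and sums: "I sums J"
  shows "((\<lambda>x. \<Sum>j. f j x) has_integral J) S"
proof -
  have partial_int: "integral S (\<lambda>x. \<Sum>j<N. f j x) = (\<Sum>j<N. I j)" for N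
    using int by (intro integral_unique has_integral_sum) auto
  have "(\<lambda>x. \<Sum>j. f j x) integrable_on S \<and>
        (\<lambda>N. integral S (\<lambda>x. \<Sum>j<N. f j x)) \<longlonglongrightarrow> integral S (\<lambda>x. \<Sum>j. f j x)"
  proof (rule monotone_convergence_increasing)
    show "(\<lambda>x. \<Sum>j<N. f j x) integrable_on S" for N
      using int by (intro integrable_sum) (auto simp: has_integral_integrable)
    show "(\<Sum>j<N. f j x) \<le> (\<Sum>j<Suc N. f j x)" if "x \<in> S" for N x
      using nonneg[OF that] by simp
    show "(\<lambda>N. \<Sum>j<N. f j x) \<longlonglongrightarrow> (\<Sum>j. f j x)" if "x \<in> S" for x
      using summable[OF that] by (rule summable_LIMSEQ)
    show "bounded (range (\<lambda>N. integral S (\<lambda>x. \<Sum>j<N. f j x)))"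
      using sums unfolding partial_int sums_def by (rule convergent_imp_bounded)
  qed
  moreover have "(\<lambda>N. integral S (\<lambda>x. \<Sum>j<N. f j x)) \<longlonglongrightarrow> J"
    using sums unfolding partial_int sums_def .
  ultimately show ?thesis
    using LIMSEQ_unique by (metis has_integral_integral)
qed

lemma qnum_eq:
  assumes "q \<noteq> 0"
  shows "qnum q k = inverse q ^ k * (1 - (q\<^sup>2) ^ k) / (inverse q - q)"
proof -
  have "inverse q ^ k * (q\<^sup>2) ^ k = q ^ k"
    using assms by (simp add: power2_eq_square power_mult_distrib power_inverse field_simps)
  then have "inverse q ^ k * (1 - (q\<^sup>2) ^ k) = - (q ^ k - inverse q ^ k)"
    by (simp add: algebra_simps)
  then show ?thesis
    unfolding qnum_def by (metis minus_diff_eq minus_divide_divide)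
qed

lemma qfact_eq:
  assumes "q \<noteq> 0"
  shows "qfact q k = inverse q ^ (k * (k + 1) div 2) * qpochhammer (q\<^sup>2) k / (inverse q - q) ^ k"
proof (induction k)
  case 0
  then show ?case by (simp add: qfact_def)
next
  case (Suc k)
  define c where "c = inverse q - q"
  have "qfact q (Suc k) = qfact q k * qnum q (Suc k)"
    unfolding qfact_def by (simp add: prod.nat_ivl_Suc')
  also have "\<dots> = inverse q ^ (k * (k + 1) div 2) * qpochhammer (q\<^sup>2) k / c ^ k
      * (inverse q ^ Suc k * (1 - (q\<^sup>2) ^ Suc k) / c)"
    unfolding Suc.IH qnum_eq[OF assms] c_def ..
  also have "\<dots> = inverse q ^ (k * (k + 1) div 2 + Suc k)
      * (qpochhammer (q\<^sup>2) k * (1 - (q\<^sup>2) ^ Suc k)) / (c ^ k * c)"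
    by (simp only: times_divide_times_eq power_add mult_ac)
  also have "k * (k + 1) div 2 + Suc k = Suc k * (Suc k + 1) div 2"
    by simp
  finally show ?case
    by (simp only: qpochhammer_Suc c_def power_Suc2)
qed

lemma qE_neg_qpower:
  assumes "q \<noteq> 0" "q\<^sup>2 \<noteq> 1"
  shows "qE q (- (q ^ (2 * j)) / (inverse q - q)) = euler_series (q\<^sup>2) ((q\<^sup>2) ^ Suc j)"
proof -
  define c where "c = inverse q - q"
  have "c \<noteq> 0"
  proof
    assume "c = 0"
    then have "q * inverse q = q * q"
      by (simp add: c_def)
    with assms show False
      by (simp add: power2_eq_square)
  qed
  have cancel: "A * (S * Y / C) / (B * P / C) = S * (A / B) * Y / P" if "C \<noteq> 0"
    for A B S Y C P :: real
    using that by (simp add: divide_simps)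
  have "q ^ (k * (k + 1) div 2) * (- (q ^ (2 * j)) / c) ^ k / qfact q k
      = euler_coeff (q\<^sup>2) k * ((q\<^sup>2) ^ Suc j) ^ k" for k
  proof -
    define T where "T = k * (k + 1) div 2"
    have "q ^ T / inverse q ^ T = (q\<^sup>2) ^ T"
      by (simp add: power_inverse divide_inverse power2_eq_square power_mult_distrib)
    also have "\<dots> = (q\<^sup>2) ^ (k * (k - 1) div 2) * (q\<^sup>2) ^ k"
      unfolding T_def triangular_eq[of k] by (rule power_add)
    finally have q_T: "q ^ T / inverse q ^ T = (q\<^sup>2) ^ (k * (k - 1) div 2) * (q\<^sup>2) ^ k" .
    have neg_power: "(- (q ^ (2 * j)) / c) ^ k = (-1) ^ k * ((q\<^sup>2) ^ j) ^ k / c ^ k"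
      by (simp only: power_divide power_minus[of "(q\<^sup>2) ^ j"] power_mult[of q 2 j])
    have "q ^ T * (- (q ^ (2 * j)) / c) ^ k / qfact q k
        = (-1) ^ k * (q ^ T / inverse q ^ T) * ((q\<^sup>2) ^ j) ^ k / qpochhammer (q\<^sup>2) k"
      unfolding qfact_eq[OF assms(1)] c_def[symmetric] T_def[symmetric] neg_power
      by (rule cancel) (simp add: \<open>c \<noteq> 0\<close>)
    also have "\<dots> = euler_coeff (q\<^sup>2) k * ((q\<^sup>2) ^ Suc j) ^ k"
      unfolding q_T euler_coeff_def by (simp add: power_mult_distrib)
    finally show ?thesis unfolding T_def .
  qed
  then show ?thesis
    unfolding qE_def euler_series_def c_def by simp
qed

lemma qg_pos:
  assumes "0 < q" "q < 1"
  shows "0 < qg q x"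
proof -
  have "0 < 2 * pi * \<bar>ln q\<bar>"
    using assms pi_gt_zero by (simp add: mult_pos_neg)
  then show ?thesis
    unfolding qg_def by simp
qed

text \<open>With \<open>x = sqrt q * exp y\<close> and \<open>l = - ln q\<close>, this is \<open>y - y\<^sup>2 / (2 * l) \<le> l / 2\<close>.\<close>
lemma mult_qg_le:
  assumes "0 < q" "q < 1" "0 < x"
  shows "x * qg q x \<le> 1 / sqrt (2 * pi * \<bar>ln q\<bar>)"
proof -
  define l where "l = - ln q"
  define y where "y = ln (x / sqrt q)"
  have "0 < l" using assms by (simp add: l_def)
  have x: "x = sqrt q * exp y"
    using assms by (simp add: y_def)
  have "exp (l / 2) = inverse (sqrt q)"
    using assms by (simp add: l_def ln_sqrt[symmetric] exp_minus)
  have "y - y\<^sup>2 / (2 * l) \<le> l / 2"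
    using \<open>0 < l\<close> sum_squares_ge_zero[of "y - l" 0]
    by (simp add: field_simps power2_eq_square)
  then have "x * exp (- y\<^sup>2 / (2 * l)) \<le> sqrt q * exp (l / 2)"
    using assms unfolding x by (simp add: mult.assoc mult_exp_exp)
  also have "\<dots> = 1"
    using assms \<open>exp (l / 2) = inverse (sqrt q)\<close> by simp
  finally have "x * exp (- y\<^sup>2 / (2 * l)) \<le> 1" .
  moreover have "x * qg q x = x * exp (- y\<^sup>2 / (2 * l)) / sqrt (2 * pi * \<bar>ln q\<bar>)"
    using assms unfolding qg_def y_def l_def by simp
  ultimately show ?thesis
    by (simp add: divide_right_mono)
qed

lemma qg_moment:
  assumes "0 < q" "q < 1" "0 < a"
  shows "((\<lambda>t. t ^ n * qg q (t * a)) has_integral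
           inverse q ^ (n * (n + 1) div 2) * inverse a ^ (n + 1)) {0<..}"
proof -
  define \<sigma> where "\<sigma> = sqrt \<bar>ln q\<bar>"
  define \<mu> where "\<mu> = ln q / 2 - ln a"
  have "0 < \<sigma>" using assms by (simp add: \<sigma>_def)
  have "\<sigma>\<^sup>2 = - ln q" using assms by (simp add: \<sigma>_def)
  have "qg q (exp u * a) = normal_density \<mu> \<sigma> u" for u
  proof -
    have "ln (exp u * a / sqrt q) = u - \<mu>"
      using assms by (simp add: ln_div ln_mult ln_sqrt \<mu>_def)
    then show ?thesis
      using assms unfolding qg_def normal_density_def \<sigma>_def by simp
  qed
  then have "(\<lambda>u. exp u * (exp u ^ n * qg q (exp u * a)))
      = (\<lambda>u. exp (real (n + 1) * u) * normal_density \<mu> \<sigma> u)"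
    by (simp only: exp_of_nat_mult) (simp add: algebra_simps)
  with normal_density_exp_moment[OF \<open>0 < \<sigma>\<close>, of "real (n + 1)" \<mu>]
  have "((\<lambda>t. t ^ n * qg q (t * a)) has_integral
          exp (real (n + 1) * \<mu> + (real (n + 1))\<^sup>2 * \<sigma>\<^sup>2 / 2)) {0<..}"
    using assms by (intro has_integral_exp_substitution) (simp_all add: less_imp_le qg_pos)
  moreover have "exp (real (n + 1) * \<mu> + (real (n + 1))\<^sup>2 * \<sigma>\<^sup>2 / 2)
      = inverse q ^ (n * (n + 1) div 2) * inverse a ^ (n + 1)"
  proof -
    have triangle: "real (n * (n + 1) div 2) = real n * (real n + 1) / 2"
      by (subst real_of_nat_div) (auto simp: algebra_simps)
    have "real (n + 1) * \<mu> + (real (n + 1))\<^sup>2 * \<sigma>\<^sup>2 / 2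
        = real (n * (n + 1) div 2) * ln (inverse q) + real (n + 1) * ln (inverse a)"
      unfolding \<mu>_def \<open>\<sigma>\<^sup>2 = - ln q\<close> triangle ln_inverse
      by (simp add: field_simps power2_eq_square)
    then show ?thesis
      using assms by (simp only: exp_add exp_of_nat_mult) simp
  qed
  ultimately show ?thesis by simp
qed

lemma inverse_minus_self_pos:
  fixes q :: real
  assumes "0 < q" "q < 1"
  shows "0 < inverse q - q"
  using assms by (simp add: field_simps mult_strict_mono'[of q 1 q 1, simplified])

lemma qw_term_eq:
  assumes "0 < q" "q < 1"
  shows "qw_term q t j
    = euler_series (q\<^sup>2) ((q\<^sup>2) ^ Suc j) * qg q (t * ((inverse q - q) / q ^ (2 * j)))"
proof -
  have "q\<^sup>2 \<noteq> 1"
    using assms by (simp add: power_less_one_iff less_imp_neq)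
  with assms show ?thesis
    unfolding qw_term_def by (subst qE_neg_qpower) (simp_all add: mult.commute)
qed

lemma qw_term_pos:
  assumes "0 < q" "q < 1"
  shows "0 < qw_term q t j"
proof -
  have "0 < q\<^sup>2" "q\<^sup>2 < 1"
    using assms by (simp_all add: power_less_one_iff)
  then show ?thesis
    using euler_series_power_pos[of "q\<^sup>2" "Suc j"] qg_pos[OF assms]
    by (simp add: qw_term_eq[OF assms])
qed

lemma summable_qw_term:
  assumes "0 < q" "q < 1" "0 < t"
  shows "summable (qw_term q t)"
proof (rule summable_comparison_test'[where N = 0])
  define c where "c = inverse q - q"
  define K where "K = 1 / sqrt (2 * pi * \<bar>ln q\<bar>)"
  have "0 < c"
    using inverse_minus_self_pos[OF assms(1,2)] by (simp add: c_def)
  have "0 < q\<^sup>2" "q\<^sup>2 < 1"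
    using assms by (simp_all add: power_less_one_iff)
  then show "summable (\<lambda>j. K / (t * c) * (q\<^sup>2) ^ j)"
    by (intro summable_mult summable_geometric) simp
  fix j
  define x where "x = t * (c / q ^ (2 * j))"
  have "0 < x"
    using assms \<open>0 < c\<close> by (simp add: x_def)
  have "x * qg q x \<le> K"
    using mult_qg_le[OF assms(1,2) \<open>0 < x\<close>] unfolding K_def .
  then have "qg q x \<le> K / x"
    using \<open>0 < x\<close> by (simp add: pos_le_divide_eq mult.commute)
  also have "\<dots> = K / (t * c) * (q\<^sup>2) ^ j"
    using assms by (simp add: x_def power_mult)
  finally have "qg q x \<le> K / (t * c) * (q\<^sup>2) ^ j" .
  moreover have "0 \<le> euler_series (q\<^sup>2) ((q\<^sup>2) ^ Suc j)"
    "euler_series (q\<^sup>2) ((q\<^sup>2) ^ Suc j) \<le> 1"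
    using euler_series_power_nonneg euler_series_power_le_1 \<open>0 < q\<^sup>2\<close> \<open>q\<^sup>2 < 1\<close>
    by blast+
  ultimately show "norm (qw_term q t j) \<le> K / (t * c) * (q\<^sup>2) ^ j"
    using qg_pos[OF assms(1,2), of x]
    unfolding qw_term_eq[OF assms(1,2)] c_def[symmetric] x_def[symmetric]
    by (simp add: abs_mult) (meson less_imp_le mult_left_le_one_le order_trans)
qed

lemma qw_term_moment:
  assumes "0 < q" "q < 1"
  shows "((\<lambda>t. t ^ n * qw_term q t j) has_integral
           inverse q ^ (n * (n + 1) div 2) / (inverse q - q) ^ (n + 1)
           * (((q\<^sup>2) ^ Suc n) ^ j * euler_series (q\<^sup>2) ((q\<^sup>2) ^ Suc j))) {0<..}"
proof -
  define c where "c = inverse q - q"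
  define E where "E = euler_series (q\<^sup>2) ((q\<^sup>2) ^ Suc j)"
  have "0 < c"
    using inverse_minus_self_pos[OF assms] by (simp add: c_def)
  then have "0 < c / q ^ (2 * j)"
    using assms by simp
  from has_integral_mult_right[OF qg_moment[OF assms this, of n], of E]
  have moment: "((\<lambda>t. t ^ n * qw_term q t j) has_integral
          E * (inverse q ^ (n * (n + 1) div 2) * inverse (c / q ^ (2 * j)) ^ (n + 1))) {0<..}"
    by (simp add: qw_term_eq[OF assms] E_def c_def algebra_simps)
  have "(q ^ (2 * j)) ^ (n + 1) = ((q\<^sup>2) ^ Suc n) ^ j"
    by (simp only: power_mult[symmetric]) (simp add: ac_simps)
  then have rhs_eq: "E * (inverse q ^ (n * (n + 1) div 2) * inverse (c / q ^ (2 * j)) ^ (n + 1))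
      = inverse q ^ (n * (n + 1) div 2) / c ^ (n + 1) * (((q\<^sup>2) ^ Suc n) ^ j * E)"
    by (simp add: power_divide)
  from moment[unfolded rhs_eq] show ?thesis
    unfolding E_def c_def .
qed

lemma qw_pos:
  assumes "0 < q" "q < 1" "0 < t"
  shows "0 < qw q t"
  using inverse_minus_self_pos[OF assms(1,2)]
    suminf_pos[OF summable_qw_term[OF assms] qw_term_pos[OF assms(1,2)]]
  by (simp add: qw_def)

lemma qw_moment:
  assumes "0 < q" "q < 1"
  shows "((\<lambda>t. t ^ n * qw q t) has_integral qfact q n) {0<..}"
proof -
  define c where "c = inverse q - q"
  define T where "T = n * (n + 1) div 2"
  have "0 < c"
    using inverse_minus_self_pos[OF assms] by (simp add: c_def)
  have q2: "0 < q\<^sup>2" "q\<^sup>2 < 1"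
    using assms by (simp_all add: power_less_one_iff)
  have "((\<lambda>t. \<Sum>j. t ^ n * qw_term q t j) has_integral
          inverse q ^ T / c ^ (n + 1) * qpochhammer (q\<^sup>2) n) {0<..}"
  proof (rule has_integral_suminf_nonneg)
    show "((\<lambda>t. t ^ n * qw_term q t j) has_integral inverse q ^ T / c ^ (n + 1)
            * (((q\<^sup>2) ^ Suc n) ^ j * euler_series (q\<^sup>2) ((q\<^sup>2) ^ Suc j))) {0<..}" for j
      unfolding T_def c_def by (rule qw_term_moment[OF assms])
    show "0 \<le> t ^ n * qw_term q t j" if "t \<in> {0<..}" for t j
      using that qw_term_pos[OF assms, of t j] by simp
    show "summable (\<lambda>j. t ^ n * qw_term q t j)" if "t \<in> {0<..}" for t
      using that summable_qw_term[OF assms, of t] by (simp add: summable_mult)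
    show "(\<lambda>j. inverse q ^ T / c ^ (n + 1)
            * (((q\<^sup>2) ^ Suc n) ^ j * euler_series (q\<^sup>2) ((q\<^sup>2) ^ Suc j)))
          sums (inverse q ^ T / c ^ (n + 1) * qpochhammer (q\<^sup>2) n)"
      by (intro sums_mult euler_series_weighted_sum q2)
  qed
  from has_integral_mult_right[OF this, of c]
  have moment: "((\<lambda>t. c * (\<Sum>j. t ^ n * qw_term q t j)) has_integral qfact q n) {0<..}"
  proof (rule back_subst[of "\<lambda>I. (_ has_integral I) _"])
    have "c * (inverse q ^ T / c ^ (n + 1) * qpochhammer (q\<^sup>2) n)
        = inverse q ^ T * qpochhammer (q\<^sup>2) n / c ^ n"
      using \<open>0 < c\<close> by (simp add: field_simps)
    also have "\<dots> = qfact q n"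
      using assms by (simp add: qfact_eq T_def c_def)
    finally show "c * (inverse q ^ T / c ^ (n + 1) * qpochhammer (q\<^sup>2) n) = qfact q n" .
  qed
  have "c * (\<Sum>j. t ^ n * qw_term q t j) = t ^ n * qw q t" if "t \<in> {0<..}" for t
    using that summable_qw_term[OF assms, of t] by (simp add: qw_def c_def suminf_mult)
  then show ?thesis
    by (rule has_integral_cong[THEN iffD1, OF _ moment])
qed

theorem mainTheorem1:
  fixes q :: real
  assumes "0 < q" and "q < 1"
  shows "(\<forall>t>0. summable (qw_term q t) \<and> qw q t > 0) \<and>
         (\<forall>n::nat. ((\<lambda>t. t ^ n * qw q t) has_integral qfact q n) {0<..})"
  by (simp add: summable_qw_term[OF assms] qw_pos[OF assms] qw_moment[OF assms])

end
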